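(* Let $d>2$ and let $\mathbb{T}_d$ be the $d$-regular tree with conductances $c(x,y)=\frac1d$ if $x\sim y$ and $c(x,y)=0$ otherwise (the simple random walk network). Then this network satisfies the Yang-type inequality with constant $C_{YT}=\frac{8\sqrt{d-1}}{d}$; that is, for every finite subset $\Omega\subset\mathbb{T}_d$ with Dirichlet eigenvalues $\lambda_1\le\cdots\le\lambda_{|\Omega|}$ and every $k<|\Omega|$, $$\sum_{i=1}^k(\lambda_{k+1}-\lambda_i)^2(1-\lambda_i)\le \frac{8\sqrt{d-1}}{d}\sum_{i=1}^k(\lambda_{k+1}-\lambda_i)(\lambda_i-\lambda_{\min}),$$ where $\lambda_{\min}=1-\frac{2\sqrt{d-1}}{d}$ is the bottom of the $L^2$ spectrum of the Laplacian of $\mathbb{T}_d$.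
   Context: A network is a pair $(V,c)$ with $V$ countable and $c:V\times V\to[0,\infty)$ symmetric with $\pi(x):=\sum_y c(x,y)<\infty$. Its transition matrix is $P(x,y)=c(x,y)/\pi(x)$ and its Laplacian is $\Delta f(x)=\sum_y P(x,y)(f(x)-f(y))$, a bounded self-adjoint operator on $L^2(V,\pi)$ (inner product $\langle f,g\rangle=\sum_x\pi(x)f(x)\overline{g(x)}$); $\lambda_{\min}$ is the bottom of its spectrum. For finite $\Omega\subset V$, the Dirichlet Laplacian $\Delta_\Omega$ is the compression of $\Delta$ to the space $L^2(\Omega)$ of functions vanishing outside $\Omega$, i.e. $\Delta_\Omega f=\mathbf 1_\Omega\cdot\Delta f$; its eigenvalues with multiplicity in nondecreasing order are the Dirichlet eigenvalues of $\Omega$. *)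

theory Defs
  imports "Jordan_Normal_Form.Char_Poly" "HOL-Computational_Algebra.Polynomial_Factorial"
    "HOL-Analysis.Infinite_Sum"
begin

definition net_pi :: "'v set \<Rightarrow> ('v \<Rightarrow> 'v \<Rightarrow> real) \<Rightarrow> 'v \<Rightarrow> real" where
  "net_pi V c x = infsum (\<lambda>y. c x y) V"

definition net_P :: "'v set \<Rightarrow> ('v \<Rightarrow> 'v \<Rightarrow> real) \<Rightarrow> 'v \<Rightarrow> 'v \<Rightarrow> real" where
  "net_P V c x y = c x y / net_pi V c x"

text \<open>A fixed enumeration of a finite set (the eigenvalues do not depend on it).\<close>
definition enum_of :: "'v set \<Rightarrow> nat \<Rightarrow> 'v" where
  "enum_of \<Omega> = (SOME e. bij_betw e {..<card \<Omega>} \<Omega>)"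

text \<open>Matrix of the Dirichlet Laplacian Delta_Omega f = 1_Omega * Delta f on L2(Omega),
  in the basis of indicator functions of the points of Omega:
  (Delta f)(x) = sum_y P(x,y)(f x - f y) = f x - sum_y P(x,y) f y.\<close>
definition dirichlet_matrix :: "'v set \<Rightarrow> ('v \<Rightarrow> 'v \<Rightarrow> real) \<Rightarrow> 'v set \<Rightarrow> real mat" where
  "dirichlet_matrix V c \<Omega> = mat (card \<Omega>) (card \<Omega>)
     (\<lambda>(i,j). (if i = j then 1 else 0) - net_P V c (enum_of \<Omega> i) (enum_of \<Omega> j))"

text \<open>Dirichlet eigenvalues with multiplicity, in nondecreasing order (list index 0 = lambda_1).\<close>
definition dirichlet_eigenvalues :: "'v set \<Rightarrow> ('v \<Rightarrow> 'v \<Rightarrow> real) \<Rightarrow> 'v set \<Rightarrow> real list" where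
  "dirichlet_eigenvalues V c \<Omega> =
     sorted_list_of_multiset (proots (char_poly (dirichlet_matrix V c \<Omega>)))"

text \<open>Vertices: words x_1 ... x_n with x_1 < d and x_i < d - 1 for i > 1; the empty
  word is the root. The root has d
  neighbours, every other vertex has d - 1 children and one parent.\<close>
definition tree_vertices :: "nat \<Rightarrow> nat list set" where
  "tree_vertices d = {xs. \<forall>i<length xs. xs ! i < (if i = 0 then d else d - 1)}"

definition tree_adj :: "nat list \<Rightarrow> nat list \<Rightarrow> bool" where
  "tree_adj x y \<longleftrightarrow> (\<exists>a. y = x @ [a]) \<or> (\<exists>a. x = y @ [a])"

definition tree_cond :: "nat \<Rightarrow> nat list \<Rightarrow> nat list \<Rightarrow> real" where
  "tree_cond d x y = (if x \<in> tree_vertices d \<and> y \<in> tree_vertices d \<and> tree_adj x y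
                       then 1 / real d else 0)"

end

theory Submission
  imports Defs "Jordan_Normal_Form.Schur_Decomposition" "HOL-Analysis.Convex"
begin

(* Let u_1, ..., u_n be an orthonormal eigenbasis of the symmetric Dirichlet matrix M, with
   eigenvalues l_1 <= ... <= l_n. For every function g, the coefficients of the commutator [M, g] u_i
   in this basis are (l_j - l_i) <g u_i, u_j>; summing over i < k and using the antisymmetry of these
   coefficients gives Yang's commutator inequality
     sum_{i<k} (l_k - l_i)^2 <[M, g] u_i, g u_i>  <=  sum_{i<k} (l_k - l_i) |[M, g] u_i|^2.
   On the tree take g to be a Busemann function of a fixed end. Every vertex has exactly one
   neighbour closer to the end (its parent), g drops by one towards it, and every vertex is the
   parent of d - 1 others. If Q is the parent map, then for a unit eigenvector u with eigenvalue l
   and c = <u, Q u> one finds l = 1 - 2c/d, <[M, g] u, g u> = c/d = (1 - l)/2 and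
   [M, g] u = (Q u - Q^T u)/d. Since |Q u|^2 and |Q^T u|^2 are at most s^2 = d - 1, comparing both
   with s u gives |[M, g] u|^2 <= 8 s (s - c)/d^2 = (4 s/d) (l - lmin). *)

section \<open>Orthonormal eigenbases of real symmetric matrices\<close>

lemma real_symmetric_eigenvalue_real:
  fixes A :: "real mat"
  assumes A: "A \<in> carrier_mat n n" and sym: "\<And>i j. i < n \<Longrightarrow> j < n \<Longrightarrow> A $$ (i,j) = A $$ (j,i)"
    and ev: "eigenvalue (map_mat complex_of_real A) a"
  shows "cnj a = a"
proof -
  let ?B = "map_mat complex_of_real A"
  from ev obtain v where "eigenvector ?B v a" unfolding eigenvalue_def by auto
  hence v: "v \<in> carrier_vec n" and v0: "v \<noteq> 0\<^sub>v n" and eq: "?B *\<^sub>v v = a \<cdot>\<^sub>v v"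
    using A unfolding eigenvector_def by auto
  have Bv: "(\<Sum>j<n. of_real (A $$ (i,j)) * v $ j) = a * v $ i" if "i < n" for i
  proof -
    have "(?B *\<^sub>v v) $ i = (a \<cdot>\<^sub>v v) $ i" using eq by simp
    thus ?thesis using that A v by (simp add: scalar_prod_def lessThan_atLeast0 mult.commute)
  qed
  define s where "s = (\<Sum>i<n. cnj (v $ i) * (\<Sum>j<n. of_real (A $$ (i,j)) * v $ j))"
  define N where "N = (\<Sum>i<n. (cmod (v $ i))\<^sup>2)"
  have "s = (\<Sum>i<n. cnj (v $ i) * (a * v $ i))"
    unfolding s_def by (intro sum.cong refl) (simp add: Bv)
  also have "\<dots> = a * (\<Sum>i<n. cnj (v $ i) * v $ i)"
    by (simp add: sum_distrib_left ac_simps)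
  also have "(\<Sum>i<n. cnj (v $ i) * v $ i) = of_real N"
    unfolding N_def of_real_sum by (intro sum.cong refl) (metis complex_norm_square mult.commute)
  finally have s_eq: "s = a * of_real N" .
  have "cnj s = (\<Sum>i<n. \<Sum>j<n. of_real (A $$ (i,j)) * v $ i * cnj (v $ j))"
    unfolding s_def by (simp add: cnj_sum sum_distrib_left ac_simps)
  also have "\<dots> = (\<Sum>j<n. \<Sum>i<n. of_real (A $$ (j,i)) * v $ i * cnj (v $ j))"
    by (subst sum.swap) (intro sum.cong refl, simp add: sym)
  also have "\<dots> = s" unfolding s_def by (simp add: sum_distrib_left ac_simps)
  finally have "cnj s = s" .
  moreover obtain i where "i < n" "v $ i \<noteq> 0"
    using v0 v by (metis carrier_vecD eq_vecI index_zero_vec)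
  hence "N > 0" unfolding N_def by (intro sum_pos2[of _ i]) auto
  ultimately show ?thesis using s_eq by (simp add: complex_eq_iff)
qed

lemma real_symmetric_char_poly_splits:
  fixes A :: "real mat"
  assumes A: "A \<in> carrier_mat n n" and sym: "\<And>i j. i < n \<Longrightarrow> j < n \<Longrightarrow> A $$ (i,j) = A $$ (j,i)"
  shows "\<exists>rs. char_poly A = (\<Prod>r\<leftarrow>rs. [:-r,1:])"
proof -
  interpret m: map_poly_inj_comm_ring_hom complex_of_real ..
  let ?B = "map_mat complex_of_real A"
  have B: "?B \<in> carrier_mat n n" using A by simp
  obtain as where as: "char_poly ?B = (\<Prod>a\<leftarrow>as. [:-a,1:])"
    using char_poly_factorized[OF B] by auto
  have "cnj a = a" if "a \<in> set as" for a
  proof (rule real_symmetric_eigenvalue_real[OF A sym])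
    have "poly (char_poly ?B) a = 0" unfolding as using that
      by (simp add: poly_prod_list prod_list_zero_iff)
    thus "eigenvalue ?B a" using eigenvalue_root_char_poly[OF B] by simp
  qed
  hence as_real: "as = map (complex_of_real \<circ> Re) as"
    by (intro map_idI[symmetric]) (simp add: complex_eq_iff)
  have "map_poly complex_of_real (char_poly A) = map_poly complex_of_real (\<Prod>r\<leftarrow>map Re as. [:-r,1:])"
    unfolding of_real_hom.char_poly_hom[OF A, symmetric] as m.hom_prod_list
    by (subst as_real) (simp add: o_def)
  thus ?thesis unfolding m.eq_iff by blast
qed

lemma proots_prod_linear_factors: "proots (\<Prod>r\<leftarrow>rs. [:-r,1:]) = mset (rs :: 'a :: idom list)"
proof (induction rs)
  case (Cons r rs)
  have "proots ([:-r,1:] * (\<Prod>r\<leftarrow>rs. [:-r,1:])) = proots [:-r,1:] + proots (\<Prod>r\<leftarrow>rs. [:-r,1:])"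
    by (rule proots_mult) (auto simp: prod_list_zero_iff)
  then show ?case using Cons by (simp del: mult_pCons_left add: proots_linear_factor)
qed simp

lemma orthonormal_basis_extension:
  fixes v :: "real vec"
  assumes v: "v \<in> carrier_vec n" and v0: "v \<noteq> 0\<^sub>v n"
  shows "\<exists>W \<in> carrier_mat n n. W\<^sup>T * W = 1\<^sub>m n \<and> (\<exists>c. col W 0 = c \<cdot>\<^sub>v v)"
proof -
  interpret cof_vec_space n "TYPE(real)" .
  have n: "n > 0" using v v0 by (metis carrier_vecD gr0I eq_vecI index_zero_vec(2) less_nat_zero_code)
  define b where "b = basis_completion v"
  from basis_completion[OF v v0, folded b_def]
  have dist_b: "distinct b" and indep: "\<not> lin_dep (set b)" and b: "set b \<subseteq> carrier_vec n"
    and hdb: "hd b = v" and len_b: "length b = n" by auto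
  then obtain vs where bv: "b = v # vs" using n by (cases b) auto
  define ws where "ws = gram_schmidt n b"
  from gram_schmidt_result[OF b dist_b indep refl, folded ws_def]
  have ws: "set ws \<subseteq> carrier_vec n" "corthogonal ws" "length ws = n"
    by (auto simp: len_b)
  have ws0: "ws ! 0 = v" using gram_schmidt_hd[OF v, of vs] ws(3) n
    unfolding ws_def bv by (cases "gram_schmidt n (v # vs)") auto
  have wsc: "ws ! i \<in> carrier_vec n" if "i < n" for i using ws that by auto
  have wsorth: "ws ! i \<bullet> ws ! j = 0 \<longleftrightarrow> i \<noteq> j" if "i < n" "j < n" for i j
    using corthogonalD[OF ws(2), of i j] that ws(3) by simp
  define us where "us = map (\<lambda>w. (1 / sqrt (w \<bullet> w)) \<cdot>\<^sub>v w) ws"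
  have usc: "us ! i \<in> carrier_vec n" if "i < n" for i
    unfolding us_def using wsc[OF that] that ws(3) by simp
  have usorth: "us ! i \<bullet> us ! j = (if i = j then 1 else 0)" if ij: "i < n" "j < n" for i j
  proof -
    have "us ! i \<bullet> us ! j = (1 / sqrt (ws!i \<bullet> ws!i)) * (1 / sqrt (ws!j \<bullet> ws!j)) * (ws!i \<bullet> ws!j)"
      unfolding us_def using wsc[OF ij(1)] wsc[OF ij(2)] ij ws(3) by simp
    moreover have "ws!i \<bullet> ws!i \<ge> 0" by (simp add: scalar_prod_def sum_nonneg)
    ultimately show ?thesis using wsorth[OF ij] wsorth[OF ij(1) ij(1)]
      by (cases "i = j") (auto simp: real_sqrt_mult[symmetric])
  qed
  define W where "W = mat_of_cols n us"
  have W: "W \<in> carrier_mat n n" unfolding W_def using ws(3) by (simp add: us_def mat_of_cols_def)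
  have colW: "col W i = us ! i" if "i < n" for i
    unfolding W_def using that ws(3) usc by (simp add: us_def col_mat_of_cols)
  have "W\<^sup>T * W = 1\<^sub>m n"
    by (rule eq_matI) (use W in \<open>auto simp: colW usorth\<close>)
  moreover have "col W 0 = (1 / sqrt (v \<bullet> v)) \<cdot>\<^sub>v v"
    using colW[of 0] n ws0 ws(3) by (simp add: us_def)
  ultimately show ?thesis using W by blast
qed

lemma symmetric_deflation:
  fixes A W :: "real mat"
  assumes A: "A \<in> carrier_mat (Suc m) (Suc m)" and sym: "A\<^sup>T = A"
    and W: "W \<in> carrier_mat (Suc m) (Suc m)" and orth: "W\<^sup>T * W = 1\<^sub>m (Suc m)"
    and eig: "A *\<^sub>v col W 0 = r \<cdot>\<^sub>v col W 0"
  shows "\<exists>A3 \<in> carrier_mat m m. A3\<^sup>T = A3 \<and>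
           W\<^sup>T * A * W = four_block_mat (mat 1 1 (\<lambda>_. r)) (0\<^sub>m 1 m) (0\<^sub>m m 1) A3"
proof -
  define A' where "A' = W\<^sup>T * A * W"
  have A': "A' \<in> carrier_mat (Suc m) (Suc m)" unfolding A'_def using W A by simp
  have symA': "A'\<^sup>T = A'"
  proof -
    have "A'\<^sup>T = (W\<^sup>T * (A * W))\<^sup>T" unfolding A'_def using W A by simp
    also have "\<dots> = (A * W)\<^sup>T * W\<^sup>T\<^sup>T" using W A by (intro transpose_mult) auto
    also have "\<dots> = W\<^sup>T * A\<^sup>T * W" using W A by (simp add: transpose_mult[of A _ _ W])
    finally show ?thesis unfolding A'_def sym .
  qed
  have col0: "A' $$ (i,0) = (if i = 0 then r else 0)" if i: "i < Suc m" for i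
  proof -
    have "A' = W\<^sup>T * (A * W)" unfolding A'_def using W A by simp
    hence "A' $$ (i,0) = col W i \<bullet> (A *\<^sub>v col W 0)"
      using W A i by (simp add: mult_mat_vec_def)
    also have "\<dots> = r * (W\<^sup>T * W) $$ (i,0)" unfolding eig using W i by simp
    finally show ?thesis using i by (simp add: orth)
  qed
  have A'_sym: "A' $$ (j,i) = A' $$ (i,j)" if "i < Suc m" "j < Suc m" for i j
    using arg_cong[OF symA', of "\<lambda>M. M $$ (i,j)"] A' that by simp
  have row0: "A' $$ (0,j) = (if j = 0 then r else 0)" if "j < Suc m" for j
    using col0[OF that] A'_sym[OF that] by simp
  define A3 where "A3 = mat m m (\<lambda>(i,j). A' $$ (Suc i, Suc j))"
  have "A3\<^sup>T = A3"
    by (rule eq_matI) (auto simp: A3_def A'_sym)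
  moreover have "A' = four_block_mat (mat 1 1 (\<lambda>_. r)) (0\<^sub>m 1 m) (0\<^sub>m m 1) A3"
    by (rule eq_matI) (use A' col0 row0 in \<open>auto simp: A3_def less_Suc_eq_0_disj\<close>)
  ultimately show ?thesis unfolding A'_def A3_def by auto
qed

lemma char_poly_orthogonal_conj:
  fixes A W :: "'a :: field mat"
  assumes A: "A \<in> carrier_mat n n" and W: "W \<in> carrier_mat n n" and WW: "W\<^sup>T * W = 1\<^sub>m n"
  shows "char_poly (W\<^sup>T * A * W) = char_poly A"
proof -
  have WW': "W * W\<^sup>T = 1\<^sub>m n" using mat_mult_left_right_inverse[OF _ W WW] W by simp
  have "similar_mat_wit A (W\<^sup>T * A * W) W W\<^sup>T"
  proof (rule similar_mat_witI[of _ _ n])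
    have "W * (W\<^sup>T * A * W) * W\<^sup>T = (W * W\<^sup>T) * A * (W * W\<^sup>T)"
      using W A by (simp add: assoc_mult_mat[of _ n n _ n _ n])
    thus "A = W * (W\<^sup>T * A * W) * W\<^sup>T" using A by (simp add: WW')
  qed (use WW WW' A W in auto)
  hence "char_poly A = char_poly (W\<^sup>T * A * W)"
    by (intro char_poly_similar) (auto simp: similar_mat_def)
  thus ?thesis by simp
qed

lemma orthogonal_four_block:
  fixes U' A3 :: "'a :: comm_ring_1 mat"
  assumes U': "U' \<in> carrier_mat m m" and A3: "A3 \<in> carrier_mat m m" and U'U': "U'\<^sup>T * U' = 1\<^sub>m m"
  defines "B \<equiv> four_block_mat (1\<^sub>m 1) (0\<^sub>m 1 m) (0\<^sub>m m 1) U'"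
  shows "B \<in> carrier_mat (Suc m) (Suc m)" and "B\<^sup>T * B = 1\<^sub>m (Suc m)"
    and "B\<^sup>T * four_block_mat (mat 1 1 (\<lambda>_. r)) (0\<^sub>m 1 m) (0\<^sub>m m 1) A3 * B
           = four_block_mat (mat 1 1 (\<lambda>_. r)) (0\<^sub>m 1 m) (0\<^sub>m m 1) (U'\<^sup>T * A3 * U')"
proof -
  have BT: "B\<^sup>T = four_block_mat (1\<^sub>m 1) (0\<^sub>m 1 m) (0\<^sub>m m 1) U'\<^sup>T"
    unfolding B_def using U' by (subst transpose_four_block_mat) auto
  show "B \<in> carrier_mat (Suc m) (Suc m)" unfolding B_def using U' by (auto intro: four_block_carrier_mat)
  show "B\<^sup>T * B = 1\<^sub>m (Suc m)" unfolding BT unfolding B_def using U' U'U'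
    by (simp add: mult_four_block_mat[of _ 1 1 _ m _ m _ _ 1 _ m])
  show "B\<^sup>T * four_block_mat (mat 1 1 (\<lambda>_. r)) (0\<^sub>m 1 m) (0\<^sub>m m 1) A3 * B
           = four_block_mat (mat 1 1 (\<lambda>_. r)) (0\<^sub>m 1 m) (0\<^sub>m m 1) (U'\<^sup>T * A3 * U')"
    unfolding BT unfolding B_def using U' A3 by (simp add: mult_four_block_mat[of _ 1 1 _ m _ m _ _ 1 _ m])
qed

lemma real_symmetric_orthogonal_diagonalization:
  fixes A :: "real mat"
  assumes "A \<in> carrier_mat n n" "A\<^sup>T = A" "char_poly A = (\<Prod>r\<leftarrow>rs. [:-r,1:])"
  shows "\<exists>U \<in> carrier_mat n n. U\<^sup>T * U = 1\<^sub>m n \<and> U\<^sup>T * A * U = mat_diag n (\<lambda>i. rs ! i)"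
  using assms
proof (induction rs arbitrary: n A)
  case Nil
  have "n = 0" using degree_monic_char_poly[OF Nil(1)] Nil(3) by simp
  then show ?case using Nil(1) by (intro bexI[of _ "1\<^sub>m 0"]) (auto intro!: eq_matI simp: mat_diag_def)
next
  case (Cons r rs n A)
  note A = Cons(2) and sym = Cons(3) and cp = Cons(4)
  have "n = degree (char_poly A)" using degree_monic_char_poly[OF A] by simp
  also have "\<dots> = Suc (length rs)" unfolding cp by (subst degree_linear_factors) simp
  finally obtain m where n: "n = Suc m" by blast
  have "eigenvalue A r" unfolding eigenvalue_root_char_poly[OF A] cp by simp
  then obtain v where "eigenvector A v r" using find_eigenvector[OF A] by blast
  hence v: "v \<in> carrier_vec n" "v \<noteq> 0\<^sub>v n" and Av: "A *\<^sub>v v = r \<cdot>\<^sub>v v"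
    using A unfolding eigenvector_def by auto
  obtain W c where W: "W \<in> carrier_mat n n" and WW: "W\<^sup>T * W = 1\<^sub>m n" and Wv: "col W 0 = c \<cdot>\<^sub>v v"
    using orthonormal_basis_extension[OF v] by blast
  have "A *\<^sub>v col W 0 = r \<cdot>\<^sub>v col W 0"
    unfolding Wv using A v by (simp add: mult_mat_vec Av smult_smult_assoc mult.commute)
  then obtain A3 where A3: "A3 \<in> carrier_mat m m" and sym3: "A3\<^sup>T = A3"
    and blk: "W\<^sup>T * A * W = four_block_mat (mat 1 1 (\<lambda>_. r)) (0\<^sub>m 1 m) (0\<^sub>m m 1) A3"
    using symmetric_deflation[of A m W r] A sym W WW unfolding n by blast
  have "[:-r, 1:] * char_poly A3 = char_poly (W\<^sup>T * A * W)"
    unfolding blk by (subst char_poly_four_block_zeros_col[OF _ _ A3]) (auto simp: char_poly_defs det_def sign_def)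
  also have "\<dots> = [:-r, 1:] * (\<Prod>r\<leftarrow>rs. [:-r,1:])"
    unfolding char_poly_orthogonal_conj[OF A W WW] cp by (simp only: list.map prod_list.Cons)
  finally have "char_poly A3 = (\<Prod>r\<leftarrow>rs. [:-r,1:])" by (subst (asm) mult_left_cancel) simp_all
  from Cons.IH[OF A3 sym3 this] obtain U' where U': "U' \<in> carrier_mat m m"
    and U'U': "U'\<^sup>T * U' = 1\<^sub>m m" and U'A3: "U'\<^sup>T * A3 * U' = mat_diag m (\<lambda>i. rs ! i)" by blast
  define B where "B = four_block_mat (1\<^sub>m 1) (0\<^sub>m 1 m) (0\<^sub>m m 1) U'"
  note B = orthogonal_four_block[OF U' A3 U'U', folded B_def n]
  define U where "U = W * B"
  have U: "U \<in> carrier_mat n n" unfolding U_def using W B by simp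
  have UT: "U\<^sup>T = B\<^sup>T * W\<^sup>T" unfolding U_def using W B by (simp add: transpose_mult)
  have "U\<^sup>T * U = B\<^sup>T * (W\<^sup>T * W) * B"
    unfolding UT unfolding U_def using W B by (simp add: assoc_mult_mat[of _ n n _ n _ n])
  also have "\<dots> = 1\<^sub>m n" using B by (simp add: WW)
  finally have UU: "U\<^sup>T * U = 1\<^sub>m n" .
  have "U\<^sup>T * A * U = B\<^sup>T * (W\<^sup>T * A * W) * B"
    unfolding UT unfolding U_def using W B A by (simp add: assoc_mult_mat[of _ n n _ n _ n])
  also have "\<dots> = mat_diag n (\<lambda>i. (r # rs) ! i)"
    unfolding blk B(3) U'A3 n by (rule eq_matI) (auto simp: mat_diag_def less_Suc_eq_0_disj split: if_splits)
  finally show ?case using UU U by blast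
qed

locale orthonormal_eigenbasis =
  fixes n :: nat and A U :: "nat \<Rightarrow> nat \<Rightarrow> real" and lam :: "nat \<Rightarrow> real"
  assumes symmetric: "x < n \<Longrightarrow> y < n \<Longrightarrow> A x y = A y x"
    and orthonormal: "i < n \<Longrightarrow> j < n \<Longrightarrow> (\<Sum>x<n. U x i * U x j) = (if i = j then 1 else 0)"
    and complete: "x < n \<Longrightarrow> y < n \<Longrightarrow> (\<Sum>i<n. U x i * U y i) = (if x = y then 1 else 0)"
    and eigen: "x < n \<Longrightarrow> i < n \<Longrightarrow> (\<Sum>y<n. A x y * U y i) = lam i * U x i"

lemma real_symmetric_orthonormal_eigenbasis:
  fixes A :: "real mat"
  assumes A: "A \<in> carrier_mat n n" and sym: "\<And>i j. i < n \<Longrightarrow> j < n \<Longrightarrow> A $$ (i,j) = A $$ (j,i)"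
  defines "ev \<equiv> sorted_list_of_multiset (proots (char_poly A))"
  shows "length ev = n \<and> (\<exists>U. orthonormal_eigenbasis n (\<lambda>x y. A $$ (x,y)) U (\<lambda>i. ev ! i))"
proof -
  obtain rs where rs: "char_poly A = (\<Prod>r\<leftarrow>rs. [:-r,1:])"
    using real_symmetric_char_poly_splits[OF A sym] by blast
  have ev_sort: "ev = sort rs" unfolding ev_def rs proots_prod_linear_factors by simp
  have cp: "char_poly A = (\<Prod>r\<leftarrow>ev. [:-r,1:])"
    unfolding rs ev_sort by (simp only: prod_mset_prod_list[symmetric] mset_map mset_sort)
  have len: "length ev = n"
    using degree_monic_char_poly[OF A] unfolding cp by (simp add: degree_linear_factors)
  have "A\<^sup>T = A" by (rule eq_matI) (use A sym in auto)
  then obtain W where W: "W \<in> carrier_mat n n" and WW: "W\<^sup>T * W = 1\<^sub>m n"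
    and WAW: "W\<^sup>T * A * W = mat_diag n (\<lambda>i. ev ! i)"
    using real_symmetric_orthogonal_diagonalization[OF A _ cp] by blast
  have WW': "W * W\<^sup>T = 1\<^sub>m n" using mat_mult_left_right_inverse[OF _ W WW] W by simp
  have "A * W = W * W\<^sup>T * A * W" using A W by (simp add: WW')
  also have "\<dots> = W * mat_diag n (\<lambda>i. ev ! i)"
    unfolding WAW[symmetric] using A W by (simp add: assoc_mult_mat[of _ n n _ n _ n])
  finally have AW: "A * W = W * mat_diag n (\<lambda>i. ev ! i)" .
  have "orthonormal_eigenbasis n (\<lambda>x y. A $$ (x,y)) (\<lambda>x i. W $$ (x,i)) (\<lambda>i. ev ! i)"
  proof
    fix i j assume "i < n" "j < n"
    thus "(\<Sum>x<n. W $$ (x,i) * W $$ (x,j)) = (if i = j then 1 else 0)"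
      using arg_cong[OF WW, of "\<lambda>M. M $$ (i,j)"] W by (simp add: scalar_prod_def lessThan_atLeast0)
  next
    fix x y assume "x < n" "y < n"
    thus "(\<Sum>i<n. W $$ (x,i) * W $$ (y,i)) = (if x = y then 1 else 0)"
      using arg_cong[OF WW', of "\<lambda>M. M $$ (x,y)"] W by (simp add: scalar_prod_def lessThan_atLeast0)
  next
    fix x i assume "x < n" "i < n"
    thus "(\<Sum>y<n. A $$ (x,y) * W $$ (y,i)) = ev ! i * W $$ (x,i)"
      using arg_cong[OF AW, of "\<lambda>M. M $$ (x,i)"] A W
      by (simp add: mat_diag_mult_right scalar_prod_def lessThan_atLeast0 mult.commute)
  qed (use sym in auto)
  with len show ?thesis by blast
qed

section \<open>Yang's commutator inequality\<close>

lemma yang_coefficient_inequality: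
  fixes lam :: "nat \<Rightarrow> real" and a :: "nat \<Rightarrow> nat \<Rightarrow> real"
  assumes sorted: "\<And>i j. i \<le> j \<Longrightarrow> j < n \<Longrightarrow> lam i \<le> lam j" and k: "k < n"
    and a_sym: "\<And>i j. a i j = a j i"
  shows "(\<Sum>i<k. (lam k - lam i)\<^sup>2 * (\<Sum>j<n. (lam j - lam i) * (a i j)\<^sup>2))
         \<le> (\<Sum>i<k. (lam k - lam i) * (\<Sum>j<n. ((lam j - lam i) * a i j)\<^sup>2))"
proof -
  define F where "F i j = (lam k - lam i) * (lam j - lam i) * (lam j - lam k) * (a i j)\<^sup>2" for i j
  have "(\<Sum>i<k. (lam k - lam i) * (\<Sum>j<n. ((lam j - lam i) * a i j)\<^sup>2))
      - (\<Sum>i<k. (lam k - lam i)\<^sup>2 * (\<Sum>j<n. (lam j - lam i) * (a i j)\<^sup>2))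
      = (\<Sum>i<k. \<Sum>j<n. F i j)"
    unfolding sum_subtractf[symmetric] sum_distrib_left
    by (intro sum.cong refl) (simp add: F_def power2_eq_square algebra_simps)
  also have "\<dots> = (\<Sum>i<k. \<Sum>j<k. F i j) + (\<Sum>i<k. \<Sum>j\<in>{k..<n}. F i j)"
    using k by (simp add: sum.distrib[symmetric] lessThan_atLeast0 sum.atLeastLessThan_concat)
  finally have diff: "(\<Sum>i<k. (lam k - lam i) * (\<Sum>j<n. ((lam j - lam i) * a i j)\<^sup>2))
      - (\<Sum>i<k. (lam k - lam i)\<^sup>2 * (\<Sum>j<n. (lam j - lam i) * (a i j)\<^sup>2))
      = (\<Sum>i<k. \<Sum>j<k. F i j) + (\<Sum>i<k. \<Sum>j\<in>{k..<n}. F i j)" .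
  \<comment> \<open>F is antisymmetric below k and nonnegative when j lies above k\<close>
  have "(\<Sum>i<k. \<Sum>j<k. F i j) = (\<Sum>i<k. \<Sum>j<k. - F j i)"
    by (intro sum.cong refl) (simp add: F_def a_sym algebra_simps)
  also have "\<dots> = - (\<Sum>i<k. \<Sum>j<k. F i j)" by (subst sum.swap) (simp add: sum_negf)
  finally have "(\<Sum>i<k. \<Sum>j<k. F i j) = 0" by simp
  moreover have "(\<Sum>i<k. \<Sum>j\<in>{k..<n}. F i j) \<ge> 0"
  proof (intro sum_nonneg)
    fix i j assume "i \<in> {..<k}" "j \<in> {k..<n}"
    hence "lam i \<le> lam k" "lam k \<le> lam j" using k sorted by auto
    thus "F i j \<ge> 0" unfolding F_def by (intro mult_nonneg_nonneg) auto
  qed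
  ultimately show ?thesis using diff by linarith
qed

definition mult_commutator :: "nat \<Rightarrow> (nat \<Rightarrow> nat \<Rightarrow> real) \<Rightarrow> (nat \<Rightarrow> real) \<Rightarrow> (nat \<Rightarrow> real) \<Rightarrow> nat \<Rightarrow> real"
  where "mult_commutator n A g u x = (\<Sum>y<n. A x y * (g y - g x) * u y)"

context orthonormal_eigenbasis
begin

lemma parseval:
  "(\<Sum>x<n. f x * h x) = (\<Sum>j<n. (\<Sum>x<n. f x * U x j) * (\<Sum>y<n. h y * U y j))"
proof -
  have "(\<Sum>j<n. (\<Sum>x<n. f x * U x j) * (\<Sum>y<n. h y * U y j))
      = (\<Sum>j<n. \<Sum>x<n. \<Sum>y<n. f x * h y * (U x j * U y j))"
    unfolding sum_product by (intro sum.cong refl) (simp add: ac_simps)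
  also have "\<dots> = (\<Sum>x<n. \<Sum>y<n. f x * h y * (\<Sum>j<n. U x j * U y j))"
    unfolding sum_distrib_left by (subst sum.swap) (intro sum.cong refl sum.swap)
  also have "\<dots> = (\<Sum>x<n. f x * h x)"
    by (intro sum.cong refl) (simp add: complete if_distrib cong: if_cong)
  finally show ?thesis by simp
qed

lemma mult_commutator_coefficient:
  assumes "i < n" "j < n"
  shows "(\<Sum>x<n. mult_commutator n A g (\<lambda>y. U y i) x * U x j)
           = (lam j - lam i) * (\<Sum>x<n. g x * U x i * U x j)"
proof -
  have "(\<Sum>x<n. mult_commutator n A g (\<lambda>y. U y i) x * U x j)
      = (\<Sum>x<n. \<Sum>y<n. A x y * g y * U y i * U x j) - (\<Sum>x<n. g x * U x j * (\<Sum>y<n. A x y * U y i))"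
    unfolding mult_commutator_def sum_subtractf[symmetric] sum_distrib_left sum_distrib_right
    by (intro sum.cong refl) (simp add: algebra_simps)
  also have "(\<Sum>x<n. \<Sum>y<n. A x y * g y * U y i * U x j) = (\<Sum>y<n. g y * U y i * (\<Sum>x<n. A y x * U x j))"
    unfolding sum_distrib_left by (subst sum.swap) (intro sum.cong refl, simp add: symmetric ac_simps)
  also have "\<dots> - (\<Sum>x<n. g x * U x j * (\<Sum>y<n. A x y * U y i))
      = (lam j - lam i) * (\<Sum>x<n. g x * U x i * U x j)"
    using assms by (simp add: eigen sum_distrib_left algebra_simps sum_subtractf[symmetric])
  finally show ?thesis .
qed

theorem yang_commutator_inequality:
  assumes sorted: "\<And>i j. i \<le> j \<Longrightarrow> j < n \<Longrightarrow> lam i \<le> lam j" and k: "k < n"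
  shows "(\<Sum>i<k. (lam k - lam i)\<^sup>2 * (\<Sum>x<n. mult_commutator n A g (\<lambda>y. U y i) x * g x * U x i))
         \<le> (\<Sum>i<k. (lam k - lam i) * (\<Sum>x<n. (mult_commutator n A g (\<lambda>y. U y i) x)\<^sup>2))"
proof -
  define a where "a i j = (\<Sum>x<n. g x * U x i * U x j)" for i j
  have a_sym: "a i j = a j i" for i j unfolding a_def by (simp add: ac_simps)
  have inner: "(\<Sum>x<n. mult_commutator n A g (\<lambda>y. U y i) x * g x * U x i)
      = (\<Sum>j<n. (lam j - lam i) * (a i j)\<^sup>2)" if "i < n" for i
    using parseval[of "mult_commutator n A g (\<lambda>y. U y i)" "\<lambda>x. g x * U x i"] that
    by (simp add: mult_commutator_coefficient a_def power2_eq_square mult.assoc)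
  have norm: "(\<Sum>x<n. (mult_commutator n A g (\<lambda>y. U y i) x)\<^sup>2)
      = (\<Sum>j<n. ((lam j - lam i) * a i j)\<^sup>2)" if "i < n" for i
    using parseval[of "mult_commutator n A g (\<lambda>y. U y i)" "mult_commutator n A g (\<lambda>y. U y i)"] that
    by (simp add: mult_commutator_coefficient a_def power2_eq_square)
  show ?thesis
    using yang_coefficient_inequality[OF sorted k a_sym] k by (simp add: inner norm)
qed

end

section \<open>Walks with a Busemann function\<close>

lemma weighted_Cauchy_Schwarz_sum:
  fixes w u :: "'a \<Rightarrow> real"
  assumes w: "\<And>y. y \<in> I \<Longrightarrow> w y \<ge> 0"
  shows "(\<Sum>y\<in>I. w y * u y)\<^sup>2 \<le> (\<Sum>y\<in>I. w y) * (\<Sum>y\<in>I. w y * (u y)\<^sup>2)"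
proof -
  have "(\<Sum>y\<in>I. w y * u y) = (\<Sum>y\<in>I. sqrt (w y) * (sqrt (w y) * u y))"
    by (intro sum.cong refl) (simp add: w mult.assoc[symmetric])
  moreover have "(\<Sum>y\<in>I. w y) = (\<Sum>y\<in>I. (sqrt (w y))\<^sup>2)"
    by (intro sum.cong refl) (simp add: w)
  moreover have "(\<Sum>y\<in>I. w y * (u y)\<^sup>2) = (\<Sum>y\<in>I. (sqrt (w y) * u y)\<^sup>2)"
    by (intro sum.cong refl) (simp add: w power_mult_distrib)
  ultimately show ?thesis by (simp only: Cauchy_Schwarz_ineq_sum)
qed

lemma sum_diff_squares_le:
  fixes u a b :: "nat \<Rightarrow> real"
  assumes unit: "(\<Sum>x<n. (u x)\<^sup>2) = 1"
    and a: "(\<Sum>x<n. (a x)\<^sup>2) \<le> s\<^sup>2" "(\<Sum>x<n. u x * a x) = c"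
    and b: "(\<Sum>x<n. (b x)\<^sup>2) \<le> s\<^sup>2" "(\<Sum>x<n. u x * b x) = c"
  shows "(\<Sum>x<n. (b x - a x)\<^sup>2) \<le> 8 * s * (s - c)"
proof -
  \<comment> \<open>compare both a and b with s u\<close>
  have "(\<Sum>x<n. (b x - a x)\<^sup>2) \<le> (\<Sum>x<n. 2 * (a x - s * u x)\<^sup>2 + 2 * (b x - s * u x)\<^sup>2)"
  proof (intro sum_mono)
    fix x
    have "0 \<le> (a x + b x - 2 * s * u x)\<^sup>2" by simp
    thus "(b x - a x)\<^sup>2 \<le> 2 * (a x - s * u x)\<^sup>2 + 2 * (b x - s * u x)\<^sup>2"
      by (simp add: power2_eq_square algebra_simps)
  qed
  also have "\<dots> = 2 * (\<Sum>x<n. (a x)\<^sup>2) + 2 * (\<Sum>x<n. (b x)\<^sup>2) - 4 * s * (\<Sum>x<n. u x * a x)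
                  - 4 * s * (\<Sum>x<n. u x * b x) + 4 * s\<^sup>2 * (\<Sum>x<n. (u x)\<^sup>2)"
    by (simp add: sum.distrib sum_subtractf sum_distrib_left power2_eq_square algebra_simps)
  also have "\<dots> \<le> 8 * s * (s - c)"
    using unit a b by (simp add: power2_eq_square algebra_simps)
  finally show ?thesis .
qed

text \<open>Q x y is the weight of the step from x to its parent y, parents pointing towards a
  fixed end of the graph, and G is a Busemann function of that end.\<close>
locale horofunction_walk =
  fixes n :: nat and M Q :: "nat \<Rightarrow> nat \<Rightarrow> real" and G :: "nat \<Rightarrow> real" and D :: real
  assumes D_gt_1: "D > 1"
    and M_eq: "x < n \<Longrightarrow> y < n \<Longrightarrow> M x y = (if x = y then 1 else 0) - (Q x y + Q y x) / D"
    and Q_nonneg: "x < n \<Longrightarrow> y < n \<Longrightarrow> Q x y \<ge> 0"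
    and G_step: "x < n \<Longrightarrow> y < n \<Longrightarrow> Q x y \<noteq> 0 \<Longrightarrow> G y = G x - 1"
    and row_sum_le: "x < n \<Longrightarrow> (\<Sum>y<n. Q x y) \<le> 1"
    and col_sum_le: "y < n \<Longrightarrow> (\<Sum>x<n. Q x y) \<le> D - 1"
begin

definition parent_avg :: "(nat \<Rightarrow> real) \<Rightarrow> nat \<Rightarrow> real"
  where "parent_avg u x = (\<Sum>y<n. Q x y * u y)"

definition child_sum :: "(nat \<Rightarrow> real) \<Rightarrow> nat \<Rightarrow> real"
  where "child_sum u x = (\<Sum>y<n. Q y x * u y)"

lemma M_symmetric: "x < n \<Longrightarrow> y < n \<Longrightarrow> M x y = M y x"
  by (simp add: M_eq add.commute)

lemma Q_mult_G: "x < n \<Longrightarrow> y < n \<Longrightarrow> Q x y * G x = Q x y * (G y + 1)"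
  using G_step by fastforce

lemma M_apply:
  assumes x: "x < n"
  shows "(\<Sum>y<n. M x y * u y) = u x - (parent_avg u x + child_sum u x) / D"
proof -
  have "(\<Sum>y<n. M x y * u y) = (\<Sum>y<n. (if x = y then u y else 0) - (Q x y * u y + Q y x * u y) / D)"
    using x D_gt_1 by (intro sum.cong refl) (auto simp: M_eq field_simps)
  thus ?thesis using x
    by (simp add: parent_avg_def child_sum_def sum_subtractf sum.distrib sum_divide_distrib[symmetric])
qed

lemma mult_commutator_G:
  assumes x: "x < n"
  shows "mult_commutator n M G u x = (parent_avg u x - child_sum u x) / D"
proof -
  have "M x y * (G y - G x) = (Q x y - Q y x) / D" if y: "y < n" for y
  proof (cases "x = y")
    case False
    have "M x y * (G y - G x) = - (Q x y * (G y - G x) + Q y x * (G y - G x)) / D"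
      using x y False D_gt_1 by (simp add: M_eq field_simps)
    moreover have "Q x y * (G y - G x) = - Q x y" "Q y x * (G y - G x) = Q y x"
      using Q_mult_G[OF x y] Q_mult_G[OF y x] by (simp_all add: algebra_simps)
    ultimately show ?thesis by (simp add: minus_divide_left)
  qed simp
  thus ?thesis unfolding mult_commutator_def parent_avg_def child_sum_def
    by (simp add: sum_divide_distrib[symmetric] sum_subtractf[symmetric] left_diff_distrib)
qed

lemma child_sum_correlation: "(\<Sum>x<n. u x * child_sum u x) = (\<Sum>x<n. u x * parent_avg u x)"
  unfolding child_sum_def parent_avg_def sum_distrib_left by (subst sum.swap) (simp add: ac_simps)

lemma parent_avg_squares_le:
  assumes unit: "(\<Sum>x<n. (u x)\<^sup>2) = 1"
  shows "(\<Sum>x<n. (parent_avg u x)\<^sup>2) \<le> D - 1"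
proof -
  have "(\<Sum>x<n. (parent_avg u x)\<^sup>2) \<le> (\<Sum>x<n. \<Sum>y<n. Q x y * (u y)\<^sup>2)"
  proof (intro sum_mono)
    fix x assume x: "x \<in> {..<n}"
    have "(parent_avg u x)\<^sup>2 \<le> (\<Sum>y<n. Q x y) * (\<Sum>y<n. Q x y * (u y)\<^sup>2)"
      unfolding parent_avg_def using x by (intro weighted_Cauchy_Schwarz_sum) (auto intro: Q_nonneg)
    also have "\<dots> \<le> (\<Sum>y<n. Q x y * (u y)\<^sup>2)"
      using x row_sum_le[of x] by (intro mult_left_le_one_le sum_nonneg) (auto intro!: mult_nonneg_nonneg Q_nonneg)
    finally show "(parent_avg u x)\<^sup>2 \<le> (\<Sum>y<n. Q x y * (u y)\<^sup>2)" .
  qed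
  also have "\<dots> = (\<Sum>y<n. (\<Sum>x<n. Q x y) * (u y)\<^sup>2)"
    by (subst sum.swap) (simp add: sum_distrib_right)
  also have "\<dots> \<le> (\<Sum>y<n. (D - 1) * (u y)\<^sup>2)"
    by (intro sum_mono mult_right_mono col_sum_le) auto
  finally show ?thesis using unit by (simp add: sum_distrib_left[symmetric])
qed

lemma child_sum_squares_le:
  assumes unit: "(\<Sum>x<n. (u x)\<^sup>2) = 1"
  shows "(\<Sum>x<n. (child_sum u x)\<^sup>2) \<le> D - 1"
proof -
  have "(\<Sum>x<n. (child_sum u x)\<^sup>2) \<le> (\<Sum>x<n. (D - 1) * (\<Sum>y<n. Q y x * (u y)\<^sup>2))"
  proof (intro sum_mono)
    fix x assume x: "x \<in> {..<n}"
    have "(child_sum u x)\<^sup>2 \<le> (\<Sum>y<n. Q y x) * (\<Sum>y<n. Q y x * (u y)\<^sup>2)"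
      unfolding child_sum_def using x by (intro weighted_Cauchy_Schwarz_sum) (auto intro: Q_nonneg)
    also have "\<dots> \<le> (D - 1) * (\<Sum>y<n. Q y x * (u y)\<^sup>2)"
      using x by (intro mult_right_mono col_sum_le sum_nonneg) (auto intro!: mult_nonneg_nonneg Q_nonneg)
    finally show "(child_sum u x)\<^sup>2 \<le> (D - 1) * (\<Sum>y<n. Q y x * (u y)\<^sup>2)" .
  qed
  also have "\<dots> = (D - 1) * (\<Sum>y<n. (\<Sum>x<n. Q y x) * (u y)\<^sup>2)"
    unfolding sum_distrib_left[symmetric] by (subst sum.swap) (simp add: sum_distrib_right)
  also have "\<dots> \<le> (D - 1) * (\<Sum>y<n. (u y)\<^sup>2)"
    using D_gt_1 by (intro mult_left_mono sum_mono mult_left_le_one_le row_sum_le)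
      (auto intro!: sum_nonneg Q_nonneg)
  finally show ?thesis using unit by simp
qed

context
  fixes u :: "nat \<Rightarrow> real" and lam :: real
  assumes unit: "(\<Sum>x<n. (u x)\<^sup>2) = 1"
    and eigen: "\<And>x. x < n \<Longrightarrow> (\<Sum>y<n. M x y * u y) = lam * u x"
begin

lemma eigenvalue_eq: "lam = 1 - 2 * (\<Sum>x<n. u x * parent_avg u x) / D"
proof -
  have "lam = (\<Sum>x<n. u x * (lam * u x))"
    using unit by (simp add: sum_distrib_left[symmetric] power2_eq_square ac_simps)
  also have "\<dots> = (\<Sum>x<n. (u x)\<^sup>2) - ((\<Sum>x<n. u x * parent_avg u x) + (\<Sum>x<n. u x * child_sum u x)) / D"
    by (simp add: eigen[symmetric] M_apply right_diff_distrib distrib_left power2_eq_square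
                  sum_subtractf sum.distrib sum_divide_distrib[symmetric])
  finally show ?thesis using unit by (simp add: child_sum_correlation)
qed

lemma mult_commutator_G_inner: "(\<Sum>x<n. mult_commutator n M G u x * G x * u x) = (1 - lam) / 2"
proof -
  let ?c = "\<Sum>x<n. u x * parent_avg u x"
  have "(\<Sum>x<n. parent_avg u x * G x * u x) = (\<Sum>x<n. \<Sum>y<n. (Q x y * G x) * (u x * u y))"
    unfolding parent_avg_def sum_distrib_right by (simp add: ac_simps)
  also have "\<dots> = (\<Sum>x<n. \<Sum>y<n. Q x y * (G y + 1) * (u x * u y))"
    by (intro sum.cong refl) (simp add: Q_mult_G)
  also have "\<dots> = (\<Sum>x<n. \<Sum>y<n. Q x y * G y * (u x * u y)) + ?c"
    by (simp add: parent_avg_def sum_distrib_left ring_distribs sum.distrib ac_simps)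
  finally have "(\<Sum>x<n. parent_avg u x * G x * u x) = (\<Sum>x<n. \<Sum>y<n. Q x y * G y * (u x * u y)) + ?c" .
  moreover have "(\<Sum>x<n. child_sum u x * G x * u x) = (\<Sum>x<n. \<Sum>y<n. Q x y * G y * (u x * u y))"
    unfolding child_sum_def sum_distrib_right by (subst sum.swap) (simp add: ac_simps)
  ultimately have "(\<Sum>x<n. (parent_avg u x - child_sum u x) * G x * u x) = ?c"
    by (simp add: left_diff_distrib sum_subtractf)
  thus ?thesis using D_gt_1
    by (simp add: mult_commutator_G eigenvalue_eq sum_divide_distrib[symmetric] field_simps)
qed

lemma mult_commutator_G_norm:
  defines "\<rho> \<equiv> 2 * sqrt (D - 1) / D"
  shows "(\<Sum>x<n. (mult_commutator n M G u x)\<^sup>2) \<le> 2 * \<rho> * (lam - (1 - \<rho>))"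
proof -
  define s where "s = sqrt (D - 1)"
  have s: "s\<^sup>2 = D - 1" unfolding s_def using D_gt_1 by simp
  have "(\<Sum>x<n. (parent_avg u x - child_sum u x)\<^sup>2) \<le> 8 * s * (s - (\<Sum>x<n. u x * parent_avg u x))"
    using sum_diff_squares_le[OF unit] child_sum_squares_le[OF unit] parent_avg_squares_le[OF unit]
      child_sum_correlation s by simp
  hence "(\<Sum>x<n. (mult_commutator n M G u x)\<^sup>2)
      \<le> 8 * s * (s - (\<Sum>x<n. u x * parent_avg u x)) / D\<^sup>2"
    by (simp add: mult_commutator_G power_divide sum_divide_distrib[symmetric] divide_right_mono)
  also have "\<dots> = 2 * \<rho> * (lam - (1 - \<rho>))"
    using D_gt_1 by (simp add: eigenvalue_eq \<rho>_def s_def[symmetric] field_simps power2_eq_square)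
  finally show ?thesis .
qed

end

end

theorem horofunction_yang_inequality:
  assumes eb: "orthonormal_eigenbasis n M U lam" and hw: "horofunction_walk n M Q G D"
    and sorted: "\<And>i j. i \<le> j \<Longrightarrow> j < n \<Longrightarrow> lam i \<le> lam j" and k: "k < n"
  defines "lmin \<equiv> 1 - 2 * sqrt (D - 1) / D"
  shows "(\<Sum>i<k. (lam k - lam i)\<^sup>2 * (1 - lam i))
           \<le> 8 * sqrt (D - 1) / D * (\<Sum>i<k. (lam k - lam i) * (lam i - lmin))"
proof -
  interpret orthonormal_eigenbasis n M U lam by (rule eb)
  interpret horofunction_walk n M Q G D by (rule hw)
  let ?C = "\<lambda>i. mult_commutator n M G (\<lambda>y. U y i)"
  have unit: "(\<Sum>x<n. (U x i)\<^sup>2) = 1" if "i < n" for i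
    using orthonormal[OF that that] by (simp add: power2_eq_square)
  have "(\<Sum>i<k. (lam k - lam i)\<^sup>2 * (1 - lam i)) = 2 * (\<Sum>i<k. (lam k - lam i)\<^sup>2 * (\<Sum>x<n. ?C i x * G x * U x i))"
    using k by (simp add: sum_distrib_left mult_commutator_G_inner[OF unit eigen])
  also have "\<dots> \<le> 2 * (\<Sum>i<k. (lam k - lam i) * (\<Sum>x<n. (?C i x)\<^sup>2))"
    using yang_commutator_inequality[OF sorted k] by simp
  also have "\<dots> \<le> 2 * (\<Sum>i<k. (lam k - lam i) * (2 * (2 * sqrt (D - 1) / D) * (lam i - lmin)))"
    using k sorted unfolding lmin_def
    by (intro mult_left_mono sum_mono mult_commutator_G_norm[OF unit eigen]) auto
  also have "\<dots> = 8 * sqrt (D - 1) / D * (\<Sum>i<k. (lam k - lam i) * (lam i - lmin))"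
    unfolding sum_distrib_left by (intro sum.cong refl) (use D_gt_1 in \<open>simp add: field_simps\<close>)
  finally show ?thesis .
qed

section \<open>The regular tree\<close>

text \<open>The distinguished end is that of the ray [], [0], [0,0], ...: toward_end x is the neighbour
  of x one step closer to it, and busemann is its Busemann function.\<close>

definition on_zero_ray :: "nat list \<Rightarrow> bool"
  where "on_zero_ray x \<longleftrightarrow> (\<forall>a\<in>set x. a = 0)"

definition toward_end :: "nat list \<Rightarrow> nat list"
  where "toward_end x = (if on_zero_ray x then x @ [0] else butlast x)"

definition busemann :: "nat list \<Rightarrow> real"
  where "busemann x = real (length x) - 2 * real (length (takeWhile (\<lambda>a. a = 0) x))"

lemma on_zero_ray_Nil [simp]: "on_zero_ray []"
  by (simp add: on_zero_ray_def)

lemma on_zero_ray_snoc [simp]: "on_zero_ray (x @ [a]) \<longleftrightarrow> on_zero_ray x \<and> a = 0"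
  by (auto simp: on_zero_ray_def)

lemma takeWhile_zero_on_zero_ray: "on_zero_ray x \<Longrightarrow> takeWhile (\<lambda>a. a = 0) x = x"
  by (simp add: on_zero_ray_def takeWhile_eq_all_conv)

lemma busemann_toward_end: "busemann (toward_end x) = busemann x - 1"
proof (cases "on_zero_ray x")
  case True
  thus ?thesis by (simp add: toward_end_def busemann_def takeWhile_zero_on_zero_ray)
next
  case False
  then obtain y a where x: "x = y @ [a]" by (cases x rule: rev_cases) auto
  show ?thesis
  proof (cases "on_zero_ray y")
    case True
    have "takeWhile (\<lambda>a. a = 0) (y @ [a]) = y @ takeWhile (\<lambda>a. a = 0) [a]"
      by (rule takeWhile_append2) (use True in \<open>auto simp: on_zero_ray_def\<close>)
    with True False x have "takeWhile (\<lambda>a. a = 0) x = y" by simp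
    thus ?thesis using True False x by (simp add: toward_end_def busemann_def takeWhile_zero_on_zero_ray)
  next
    case y: False
    then obtain b where "b \<in> set y" "b \<noteq> 0" by (auto simp: on_zero_ray_def)
    hence "takeWhile (\<lambda>a. a = 0) x = takeWhile (\<lambda>a. a = 0) y"
      unfolding x by (simp add: takeWhile_append1)
    thus ?thesis using False y x by (simp add: toward_end_def busemann_def)
  qed
qed

lemma tree_adj_iff_toward_end: "tree_adj x y \<longleftrightarrow> toward_end x = y \<or> toward_end y = x"
proof
  assume "tree_adj x y"
  then consider a where "y = x @ [a]" | a where "x = y @ [a]" unfolding tree_adj_def by auto
  thus "toward_end x = y \<or> toward_end y = x"
    by cases (auto simp: toward_end_def)
next
  have "tree_adj x y" if "toward_end x = y" for x y
    using that unfolding toward_end_def tree_adj_def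
    by (cases x rule: rev_cases) (auto split: if_splits)
  moreover assume "toward_end x = y \<or> toward_end y = x"
  ultimately show "tree_adj x y" unfolding tree_adj_def by blast
qed

lemma snoc_in_tree_vertices:
  "x @ [a] \<in> tree_vertices d \<longleftrightarrow> x \<in> tree_vertices d \<and> a < (if x = [] then d else d - 1)"
  by (auto simp: tree_vertices_def nth_append less_Suc_eq)

lemma butlast_in_tree_vertices: "x \<in> tree_vertices d \<Longrightarrow> butlast x \<in> tree_vertices d"
  by (auto simp: tree_vertices_def nth_butlast)

lemma toward_end_preimage_subset:
  "{y \<in> tree_vertices d. toward_end y = z}
     \<subseteq> (if on_zero_ray z \<and> z \<noteq> [] then {butlast z} else {})
        \<union> (\<lambda>a. z @ [a]) ` {a. a < (if z = [] then d else d - 1) \<and> \<not> (on_zero_ray z \<and> a = 0)}"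
proof
  fix y assume "y \<in> {y \<in> tree_vertices d. toward_end y = z}"
  hence y: "y \<in> tree_vertices d" "toward_end y = z" by auto
  show "y \<in> (if on_zero_ray z \<and> z \<noteq> [] then {butlast z} else {})
        \<union> (\<lambda>a. z @ [a]) ` {a. a < (if z = [] then d else d - 1) \<and> \<not> (on_zero_ray z \<and> a = 0)}"
  proof (cases "on_zero_ray y")
    case True
    hence "z = y @ [0]" using y(2) by (simp add: toward_end_def)
    thus ?thesis using True by simp
  next
    case False
    then obtain a where "y = z @ [a]" using y(2) unfolding toward_end_def
      by (cases y rule: rev_cases) auto
    thus ?thesis using y(1) False by (auto simp: snoc_in_tree_vertices)
  qed
qed

lemma toward_end_preimage:
  assumes "d \<ge> 2"
  shows "finite {y \<in> tree_vertices d. toward_end y = z}"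
    and "card {y \<in> tree_vertices d. toward_end y = z} \<le> d - 1"
proof -
  define B where "B = (if z = [] then d else d - 1)"
  define S where "S = (if on_zero_ray z \<and> z \<noteq> [] then {butlast z} else {})
    \<union> (\<lambda>a. z @ [a]) ` {a. a < B \<and> \<not> (on_zero_ray z \<and> a = 0)}"
  have sub: "{y \<in> tree_vertices d. toward_end y = z} \<subseteq> S"
    unfolding S_def B_def by (rule toward_end_preimage_subset)
  have "card S \<le> (if on_zero_ray z \<and> z \<noteq> [] then 1 else 0) + card {a. a < B \<and> \<not> (on_zero_ray z \<and> a = 0)}"
    unfolding S_def by (rule order_trans[OF card_Un_le add_mono]) (auto intro: card_image_le)
  also have "\<dots> \<le> d - 1"
  proof (cases "on_zero_ray z")
    case True
    have "{a. a < B \<and> \<not> (on_zero_ray z \<and> a = 0)} = {1..<B}" using True by auto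
    thus ?thesis using True assms by (simp add: B_def, arith)
  next
    case False
    hence "z \<noteq> []" by auto
    thus ?thesis using False by (simp add: B_def)
  qed
  finally have "card S \<le> d - 1" .
  moreover have "finite S" unfolding S_def by simp
  ultimately show "card {y \<in> tree_vertices d. toward_end y = z} \<le> d - 1"
    using sub by (meson card_mono le_trans)
  show "finite {y \<in> tree_vertices d. toward_end y = z}"
    using sub \<open>finite S\<close> by (rule finite_subset)
qed

lemma tree_neighbours:
  assumes x: "x \<in> tree_vertices d"
  shows "{y \<in> tree_vertices d. tree_adj x y} =
    (\<lambda>a. x @ [a]) ` {..<(if x = [] then d else d - 1)} \<union> (if x = [] then {} else {butlast x})"
proof (intro equalityI subsetI)
  fix y assume "y \<in> {y \<in> tree_vertices d. tree_adj x y}"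
  hence y: "y \<in> tree_vertices d" "tree_adj x y" by auto
  from y(2) consider a where "y = x @ [a]" | a where "x = y @ [a]" unfolding tree_adj_def by auto
  thus "y \<in> (\<lambda>a. x @ [a]) ` {..<(if x = [] then d else d - 1)} \<union> (if x = [] then {} else {butlast x})"
  proof cases
    case (1 a)
    thus ?thesis using y(1) snoc_in_tree_vertices[of x a d] by auto
  qed auto
next
  fix y assume "y \<in> (\<lambda>a. x @ [a]) ` {..<(if x = [] then d else d - 1)} \<union> (if x = [] then {} else {butlast x})"
  then consider a where "y = x @ [a]" "a < (if x = [] then d else d - 1)" | "x \<noteq> []" "y = butlast x"
    by (auto split: if_splits)
  thus "y \<in> {y \<in> tree_vertices d. tree_adj x y}"
  proof cases
    case 1 thus ?thesis using x snoc_in_tree_vertices[of x _ d] unfolding tree_adj_def by auto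
  next
    case 2
    hence "x = butlast x @ [last x]" by simp
    thus ?thesis using 2 x butlast_in_tree_vertices unfolding tree_adj_def by blast
  qed
qed

lemma card_tree_neighbours:
  assumes x: "x \<in> tree_vertices d" and "d > 0"
  shows "finite {y \<in> tree_vertices d. tree_adj x y}" "card {y \<in> tree_vertices d. tree_adj x y} = d"
proof -
  have "card ((\<lambda>a. x @ [a]) ` {..<(if x = [] then d else d - 1)}) = (if x = [] then d else d - 1)"
    by (simp add: card_image inj_on_def)
  moreover have "butlast x \<notin> (\<lambda>a. x @ [a]) ` {..<(if x = [] then d else d - 1)}"
    by (auto dest: arg_cong[of _ _ length])
  ultimately show "card {y \<in> tree_vertices d. tree_adj x y} = d"
    unfolding tree_neighbours[OF x] using assms by (auto simp: card_insert_if)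
  show "finite {y \<in> tree_vertices d. tree_adj x y}" unfolding tree_neighbours[OF x] by simp
qed

lemma net_pi_tree_cond:
  assumes x: "x \<in> tree_vertices d" and d: "d > 0"
  shows "net_pi (tree_vertices d) (tree_cond d) x = 1"
proof -
  let ?N = "{y \<in> tree_vertices d. tree_adj x y}"
  have "net_pi (tree_vertices d) (tree_cond d) x = infsum (tree_cond d x) ?N"
    unfolding net_pi_def by (rule infsum_cong_neutral) (auto simp: tree_cond_def x)
  also have "\<dots> = (\<Sum>y\<in>?N. 1 / real d)"
    using card_tree_neighbours[OF x d] by (simp add: tree_cond_def x)
  also have "\<dots> = 1" using card_tree_neighbours[OF x d] d by simp
  finally show ?thesis .
qed

lemma bij_betw_enum_of:
  assumes "finite \<Omega>"
  shows "bij_betw (enum_of \<Omega>) {..<card \<Omega>} \<Omega>"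
  unfolding enum_of_def lessThan_atLeast0 using ex_bij_betw_nat_finite[OF assms] by (rule someI_ex)

lemma tree_dirichlet_horofunction_walk:
  assumes d: "d \<ge> 2" and fin: "finite \<Omega>" and sub: "\<Omega> \<subseteq> tree_vertices d"
  defines "e \<equiv> enum_of \<Omega>"
  shows "horofunction_walk (card \<Omega>) (\<lambda>x y. dirichlet_matrix (tree_vertices d) (tree_cond d) \<Omega> $$ (x,y))
           (\<lambda>x y. of_bool (toward_end (e x) = e y)) (\<lambda>x. busemann (e x)) (real d)"
proof -
  let ?n = "card \<Omega>" and ?Q = "\<lambda>x y. of_bool (toward_end (e x) = e y) :: real"
  have bij: "bij_betw e {..<?n} \<Omega>" unfolding e_def by (rule bij_betw_enum_of[OF fin])
  hence e: "e x \<in> tree_vertices d" if "x < ?n" for x using sub that by (auto dest: bij_betw_apply)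
  have inj: "inj_on e {..<?n}" using bij by (rule bij_betw_imp_inj_on)
  have M_eq: "dirichlet_matrix (tree_vertices d) (tree_cond d) \<Omega> $$ (x,y)
                = (if x = y then 1 else 0) - (?Q x y + ?Q y x) / real d" if x: "x < ?n" and y: "y < ?n" for x y
  proof -
    have "\<not> (toward_end (e x) = e y \<and> toward_end (e y) = e x)"
      using busemann_toward_end[of "e x"] busemann_toward_end[of "e y"] by auto
    hence "tree_cond d (e x) (e y) = (?Q x y + ?Q y x) / real d"
      using e[OF x] e[OF y] by (auto simp: tree_cond_def tree_adj_iff_toward_end)
    thus ?thesis using x y d net_pi_tree_cond[OF e[OF x]] by (simp add: dirichlet_matrix_def net_P_def e_def)
  qed
  have row: "(\<Sum>y<?n. ?Q x y) \<le> 1" for x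
  proof -
    have "card ({..<?n} \<inter> {y. toward_end (e x) = e y}) \<le> card {toward_end (e x)}"
      by (rule card_inj_on_le[of e]) (use inj in \<open>auto simp: inj_on_def\<close>)
    thus ?thesis by simp
  qed
  have col: "(\<Sum>x<?n. ?Q x y) \<le> real d - 1" if "y < ?n" for y
  proof -
    have "card ({..<?n} \<inter> {x. toward_end (e x) = e y}) \<le> card {z \<in> tree_vertices d. toward_end z = e y}"
      by (rule card_inj_on_le[of e])
         (use inj e toward_end_preimage(1)[of d "e y"] d in \<open>auto simp: inj_on_def\<close>)
    also have "\<dots> \<le> d - 1" using toward_end_preimage(2) d by simp
    finally show ?thesis using d by (simp add: of_nat_diff)
  qed
  show ?thesis
    using d M_eq row col by unfold_locales (auto simp: busemann_toward_end[symmetric])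
qed

theorem theorem1p3:
  fixes d :: nat and \<Omega> :: "nat list set" and k :: nat
  assumes "d > 2"
    and "finite \<Omega>" and "\<Omega> \<subseteq> tree_vertices d"
    and "k < card \<Omega>"
  shows "(let ev = dirichlet_eigenvalues (tree_vertices d) (tree_cond d) \<Omega>;
              lmin = 1 - 2 * sqrt (real d - 1) / real d
          in (\<Sum>i<k. (ev ! k - ev ! i)\<^sup>2 * (1 - ev ! i))
             \<le> 8 * sqrt (real d - 1) / real d * (\<Sum>i<k. (ev ! k - ev ! i) * (ev ! i - lmin)))"
proof -
  let ?n = "card \<Omega>" and ?M = "dirichlet_matrix (tree_vertices d) (tree_cond d) \<Omega>"
  let ?ev = "dirichlet_eigenvalues (tree_vertices d) (tree_cond d) \<Omega>"
  have walk: "horofunction_walk ?n (\<lambda>x y. ?M $$ (x,y))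
      (\<lambda>x y. of_bool (toward_end (enum_of \<Omega> x) = enum_of \<Omega> y)) (\<lambda>x. busemann (enum_of \<Omega> x)) (real d)"
    by (rule tree_dirichlet_horofunction_walk) (use assms in auto)
  have "?M \<in> carrier_mat ?n ?n" by (simp add: dirichlet_matrix_def)
  then obtain U where len: "length ?ev = ?n"
    and basis: "orthonormal_eigenbasis ?n (\<lambda>x y. ?M $$ (x,y)) U (\<lambda>i. ?ev ! i)"
    using real_symmetric_orthonormal_eigenbasis horofunction_walk.M_symmetric[OF walk]
    unfolding dirichlet_eigenvalues_def by blast
  have "?ev ! i \<le> ?ev ! j" if "i \<le> j" "j < ?n" for i j
    using that len by (intro sorted_nth_mono) (simp_all add: dirichlet_eigenvalues_def)
  from horofunction_yang_inequality[OF basis walk this assms(4)]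
  show ?thesis by (simp add: Let_def)
qed

end
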